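(* Let $k$ be a symmetric positive semidefinite kernel on $\mathbb{R}^d$, $\sigma_n^2>0$, and let $\mathbb{D}_N^x=\{\bm{x}^{(i)}\}_{i=1}^N$ with $N\ge1$ be an input training data set with GP posterior variance $\sigma_N^2(\cdot)$. Then for every $\bm{x}\in\mathbb{R}^d$, $$\sigma_N^2(\bm{x})\le k(\bm{x},\bm{x})-\frac{N\min_{\bm{x}'\in\mathbb{D}_N^x}k(\bm{x}',\bm{x})^2}{N\max_{\bm{x}',\bm{x}''\in\mathbb{D}_N^x}k(\bm{x}',\bm{x}'')+\sigma_n^2}.$$
   Context: Gaussian process posterior variance: with $K_{N,ij}=k(\bm{x}^{(i)},\bm{x}^{(j)})$, $k_{N,i}(\bm{x})=k(\bm{x},\bm{x}^{(i)})$, $\bm{A}_N=\bm{K}_N+\sigma_n^2\bm{I}_N$, $\sigma_N^2(\bm{x})=k(\bm{x},\bm{x})-\bm{k}_N(\bm{x})^T\bm{A}_N^{-1}\bm{k}_N(\bm{x})$. The max and min range over training inputs (pairs may coincide). *)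

theory Defs
  imports "HOL-Analysis.Analysis"
begin

definition psd_kernel :: "('a \<Rightarrow> 'a \<Rightarrow> real) \<Rightarrow> bool" where
  "psd_kernel k \<longleftrightarrow>
     (\<forall>x y. k x y = k y x) \<and>
     (\<forall>(n::nat) (p::nat \<Rightarrow> 'a) (c::nat \<Rightarrow> real).
        0 \<le> (\<Sum>i<n. \<Sum>j<n. c i * c j * k (p i) (p j)))"

(* Gram matrix K_N of the training inputs X (indexed by the finite type 'n, N = CARD('n)) *)
definition gram_matrix :: "('a \<Rightarrow> 'a \<Rightarrow> real) \<Rightarrow> ('n::finite \<Rightarrow> 'a) \<Rightarrow> real^'n^'n" where
  "gram_matrix k X = (\<chi> i j. k (X i) (X j))"

definition kernel_vec :: "('a \<Rightarrow> 'a \<Rightarrow> real) \<Rightarrow> ('n::finite \<Rightarrow> 'a) \<Rightarrow> 'a \<Rightarrow> real^'n" where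
  "kernel_vec k X x = (\<chi> i. k x (X i))"

definition gp_post_var :: "('a \<Rightarrow> 'a \<Rightarrow> real) \<Rightarrow> real \<Rightarrow> ('n::finite \<Rightarrow> 'a) \<Rightarrow> 'a \<Rightarrow> real" where
  "gp_post_var k s2 X x =
     k x x - kernel_vec k X x \<bullet> (matrix_inv (gram_matrix k X + s2 *\<^sub>R mat 1) *v kernel_vec k X x)"

end

theory Submission
  imports Defs
begin

text \<open>
  With \<open>A = K\<^sub>N + \<sigma>\<^sub>n\<^sup>2 I\<close> positive definite and \<open>v = k\<^sub>N(x)\<close>, the quadratic form
  \<open>v\<^sup>T A\<^sup>-\<^sup>1 v\<close> is the maximum of \<open>2 c u\<^sup>Tv - c\<^sup>2 u\<^sup>TAu\<close> over all \<open>u\<close> and \<open>c\<close>, so every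
  test vector gives \<open>v\<^sup>T A\<^sup>-\<^sup>1 v \<ge> (u\<^sup>Tv)\<^sup>2 / D\<close> whenever \<open>u\<^sup>TAu \<le> D\<close>. Taking
  \<open>u = sgn v\<close> gives \<open>u\<^sup>Tv = \<Sum>\<^sub>i |v\<^sub>i| \<ge> N sqrt (min\<^sub>i v\<^sub>i\<^sup>2)\<close>, while every Gram entry is
  bounded in absolute value by the largest diagonal entry, so \<open>u\<^sup>TAu \<le> N\<^sup>2 max K + \<sigma>\<^sub>n\<^sup>2 N\<close>.
\<close>

lemma psd_kernel_sym: "psd_kernel k \<Longrightarrow> k a b = k b a"
  unfolding psd_kernel_def by blast

lemma psd_kernelD:
  fixes n :: nat and c :: "nat \<Rightarrow> real"
  shows "psd_kernel k \<Longrightarrow> 0 \<le> (\<Sum>i<n. \<Sum>j<n. c i * c j * k (p i) (p j))"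
  unfolding psd_kernel_def by blast

lemma psd_kernel_sum_nonneg:
  fixes X :: "'n::finite \<Rightarrow> 'a"
  assumes "psd_kernel k"
  shows "0 \<le> (\<Sum>i\<in>UNIV. \<Sum>j\<in>UNIV. c i * c j * k (X i) (X j))"
proof -
  obtain h where h: "bij_betw h {..<CARD('n)} (UNIV::'n set)"
    using ex_bij_betw_nat_finite[of "UNIV::'n set"] by (auto simp: atLeast0LessThan)
  have "0 \<le> (\<Sum>i<CARD('n). \<Sum>j<CARD('n). c (h i) * c (h j) * k (X (h i)) (X (h j)))"
    by (rule psd_kernelD[OF assms])
  also have "\<dots> = (\<Sum>i<CARD('n). \<Sum>j\<in>UNIV. c (h i) * c j * k (X (h i)) (X j))"
    by (intro sum.cong refl sum.reindex_bij_betw[OF h])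
  also have "\<dots> = (\<Sum>i\<in>UNIV. \<Sum>j\<in>UNIV. c i * c j * k (X i) (X j))"
    using sum.reindex_bij_betw[OF h] by simp
  finally show ?thesis .
qed

lemma psd_kernel_abs_le:
  assumes "psd_kernel k"
  shows "2 * \<bar>k a b\<bar> \<le> k a a + k b b"
proof -
  have form: "0 \<le> k a a + 2 * s * k a b + s\<^sup>2 * k b b" for s
  proof -
    have "0 \<le> (\<Sum>i<2::nat. \<Sum>j<2::nat. (if i = 0 then 1 else s) * (if j = 0 then 1 else s)
                * k (if i = 0 then a else b) (if j = 0 then a else b))"
      by (rule psd_kernelD[OF assms])
    then show ?thesis
      by (simp add: numeral_2_eq_2 psd_kernel_sym[OF assms, of b a] power2_eq_square algebra_simps)
  qed
  from form[of 1] form[of "-1"] show ?thesis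
    by (simp add: abs_if)
qed

lemma inner_transpose_sym:
  fixes A :: "real^'n^'n"
  assumes "transpose A = A"
  shows "u \<bullet> (A *v w) = w \<bullet> (A *v u)"
  by (metis assms dot_lmul_matrix inner_commute transpose_matrix_vector)

lemma invertible_if_pos_def:
  fixes A :: "real^'n^'n"
  assumes "\<And>y. y \<noteq> 0 \<Longrightarrow> 0 < y \<bullet> (A *v y)"
  shows "invertible A"
proof -
  have "\<forall>y. A *v y = 0 \<longrightarrow> y = 0"
    using assms by fastforce
  then show ?thesis
    using matrix_left_invertible_ker invertible_left_inverse by blast
qed

lemma matrix_inv_right:
  fixes A :: "'a::field^'n^'n"
  assumes "invertible A"
  shows "A ** matrix_inv A = mat 1"
  using assms unfolding invertible_def matrix_inv_def
  by (rule someI_ex[where P = "\<lambda>B. A ** B = mat 1 \<and> B ** A = mat 1", THEN conjunct1])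

text \<open>Variational lower bound for \<open>v\<^sup>T A\<^sup>-\<^sup>1 v\<close>, from \<open>(w - c u)\<^sup>T A (w - c u) \<ge> 0\<close>
  with \<open>A w = v\<close> and \<open>c = u\<^sup>Tv / D\<close>.\<close>

lemma inner_matrix_inv_ge:
  fixes A :: "real^'n^'n"
  assumes sym: "transpose A = A"
    and psd: "\<And>y. 0 \<le> y \<bullet> (A *v y)"
    and "invertible A"
    and uAu: "u \<bullet> (A *v u) \<le> D" and "0 < D"
  shows "(u \<bullet> v)\<^sup>2 / D \<le> v \<bullet> (matrix_inv A *v v)"
proof -
  define w where "w = matrix_inv A *v v"
  have Aw: "A *v w = v"
    unfolding w_def by (simp add: matrix_vector_mul_assoc matrix_inv_right[OF \<open>invertible A\<close>])
  define c where "c = (u \<bullet> v) / D"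
  have "0 \<le> (w - c *\<^sub>R u) \<bullet> (A *v (w - c *\<^sub>R u))"
    by (rule psd)
  also have "\<dots> = v \<bullet> w - 2 * c * (u \<bullet> v) + c\<^sup>2 * (u \<bullet> (A *v u))"
    using inner_transpose_sym[OF sym, of w u]
    by (simp add: Aw matrix_vector_mult_diff_distrib inner_diff_left inner_diff_right
        inner_commute power2_eq_square algebra_simps)
  also have "\<dots> \<le> v \<bullet> w - 2 * c * (u \<bullet> v) + c\<^sup>2 * D"
    using uAu by (simp add: mult_left_mono)
  also have "\<dots> = v \<bullet> w - (u \<bullet> v)\<^sup>2 / D"
    using \<open>0 < D\<close> by (simp add: c_def power2_eq_square field_simps)
  finally show ?thesis
    by (simp add: w_def)
qed

lemma inner_gram_matrix:
  "u \<bullet> (gram_matrix k X *v w) = (\<Sum>i\<in>UNIV. \<Sum>j\<in>UNIV. u$i * w$j * k (X i) (X j))"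
  by (simp add: inner_vec_def matrix_vector_mult_def gram_matrix_def sum_distrib_left
      algebra_simps)

lemma transpose_regularized_gram_matrix:
  "psd_kernel k \<Longrightarrow> transpose (gram_matrix k X + s *\<^sub>R mat 1) = gram_matrix k X + s *\<^sub>R mat 1"
  by (simp add: transpose_def gram_matrix_def mat_def vec_eq_iff psd_kernel_sym[of k])

lemma regularized_gram_pos_def:
  assumes "psd_kernel k" "0 < s2" "y \<noteq> 0"
  shows "0 < y \<bullet> ((gram_matrix k X + s2 *\<^sub>R mat 1) *v y)"
proof -
  have "0 \<le> y \<bullet> (gram_matrix k X *v y)"
    using psd_kernel_sum_nonneg[OF assms(1), of "\<lambda>i. y$i" X] by (simp add: inner_gram_matrix)
  moreover have "0 < s2 * (y \<bullet> y)"
    using assms(2,3) by simp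
  ultimately show ?thesis
    by (simp add: matrix_vector_mult_add_rdistrib scaleR_matrix_vector_assoc[symmetric]
        inner_add_right)
qed

lemma inner_gram_matrix_le:
  fixes u :: "real^'n::finite"
  assumes "\<And>i. \<bar>u$i\<bar> \<le> 1" and "\<And>i j. \<bar>k (X i) (X j)\<bar> \<le> M"
  shows "u \<bullet> (gram_matrix k X *v u) \<le> (real CARD('n))\<^sup>2 * M"
proof -
  have "u$i * u$j * k (X i) (X j) \<le> M" for i j
  proof -
    have "u$i * u$j * k (X i) (X j) \<le> \<bar>u$i\<bar> * \<bar>u$j\<bar> * \<bar>k (X i) (X j)\<bar>"
      by (metis abs_ge_self abs_mult)
    also have "\<dots> \<le> 1 * 1 * M"
      using assms by (intro mult_mono) auto
    finally show ?thesis by simp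
  qed
  then have "u \<bullet> (gram_matrix k X *v u) \<le> (\<Sum>i\<in>(UNIV::'n set). \<Sum>j\<in>(UNIV::'n set). M)"
    unfolding inner_gram_matrix by (intro sum_mono)
  then show ?thesis
    by (simp add: power2_eq_square)
qed

lemma abs_gram_entry_le_Max:
  fixes X :: "'n::finite \<Rightarrow> 'a"
  assumes "psd_kernel k"
  shows "\<bar>k (X i) (X j)\<bar> \<le> Max {k (X i) (X j) | i j. True}"
proof -
  have fin: "finite {k (X i) (X j) | i j. True}"
    using finite_image_set2[of "\<lambda>_. True" "\<lambda>_. True" "\<lambda>i j. k (X i) (X j)"] by simp
  have "k (X l) (X l) \<le> Max {k (X i) (X j) | i j. True}" for l
    using fin by (intro Max_ge) auto
  from this[of i] this[of j] show ?thesis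
    using psd_kernel_abs_le[OF assms, of "X i" "X j"] by linarith
qed

lemma Max_gram_entry_nonneg:
  fixes X :: "'n::finite \<Rightarrow> 'a"
  shows "psd_kernel k \<Longrightarrow> 0 \<le> Max {k (X i) (X j) | i j. True}"
  using abs_gram_entry_le_Max abs_ge_zero order_trans by blast

lemma sum_abs_sq_div_le_gram_inv_form:
  fixes X :: "'n::finite \<Rightarrow> 'a" and v :: "real^'n"
  assumes "psd_kernel k" "0 < s2"
  defines "N \<equiv> real CARD('n)" and "M \<equiv> Max {k (X i) (X j) | i j. True}"
  shows "(\<Sum>i\<in>UNIV. \<bar>v$i\<bar>)\<^sup>2 / (N\<^sup>2 * M + s2 * N)
    \<le> v \<bullet> (matrix_inv (gram_matrix k X + s2 *\<^sub>R mat 1) *v v)"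
proof -
  define A where "A = gram_matrix k X + s2 *\<^sub>R mat 1"
  define u :: "real^'n" where "u = (\<chi> i. sgn (v$i))"
  have "0 < N\<^sup>2 * M + s2 * N"
    using Max_gram_entry_nonneg[OF assms(1), of X] \<open>0 < s2\<close>
    by (simp add: N_def M_def add_nonneg_pos)
  moreover have "u \<bullet> (A *v u) \<le> N\<^sup>2 * M + s2 * N"
  proof -
    have "\<bar>u$i\<bar> \<le> 1" for i
      by (simp add: u_def abs_sgn_eq)
    then have "u \<bullet> (gram_matrix k X *v u) \<le> N\<^sup>2 * M"
      using inner_gram_matrix_le abs_gram_entry_le_Max[OF assms(1)] unfolding N_def M_def by blast
    moreover have "u \<bullet> u \<le> N"
      using sum_mono[of UNIV "\<lambda>i. u$i * u$i" "\<lambda>_. 1"]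
      by (simp add: N_def u_def inner_vec_def sgn_if)
    then have "s2 * (u \<bullet> u) \<le> s2 * N"
      using \<open>0 < s2\<close> by simp
    ultimately show ?thesis
      by (simp add: A_def matrix_vector_mult_add_rdistrib inner_add_right
          scaleR_matrix_vector_assoc[symmetric])
  qed
  moreover have A_pos: "0 < y \<bullet> (A *v y)" if "y \<noteq> 0" for y
    unfolding A_def using regularized_gram_pos_def[OF assms(1,2) that] .
  then have "0 \<le> y \<bullet> (A *v y)" for y
    by (cases "y = 0") (auto intro: less_imp_le)
  ultimately have "(u \<bullet> v)\<^sup>2 / (N\<^sup>2 * M + s2 * N) \<le> v \<bullet> (matrix_inv A *v v)"
    using inner_matrix_inv_ge[OF _ _ invertible_if_pos_def[OF A_pos]]
      transpose_regularized_gram_matrix[OF assms(1)] unfolding A_def by blast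
  moreover have "u \<bullet> v = (\<Sum>i\<in>UNIV. \<bar>v$i\<bar>)"
    by (simp add: u_def inner_vec_def abs_sgn mult.commute)
  ultimately show ?thesis
    by (simp add: A_def)
qed

lemma card_sq_mult_Min_sq_le:
  fixes v :: "real^'n::finite"
  shows "(real CARD('n))\<^sup>2 * Min {(v$i)\<^sup>2 | i. True} \<le> (\<Sum>i\<in>UNIV. \<bar>v$i\<bar>)\<^sup>2"
proof -
  define m where "m = Min {(v$i)\<^sup>2 | i. True}"
  have fin: "finite {(v$i)\<^sup>2 | i. True}"
    using finite_image_set[of "\<lambda>_. True" "\<lambda>i. (v$i)\<^sup>2"] by simp
  have "m \<in> {(v$i)\<^sup>2 | i. True}"
    unfolding m_def using fin by (intro Min_in) auto
  then have "0 \<le> m"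
    by auto
  have "sqrt m \<le> \<bar>v$i\<bar>" for i
    using real_sqrt_le_mono[OF Min_le[OF fin, of "(v$i)\<^sup>2"]] by (auto simp: m_def)
  then have "(\<Sum>i\<in>(UNIV::'n set). sqrt m) \<le> (\<Sum>i\<in>UNIV. \<bar>v$i\<bar>)"
    by (intro sum_mono)
  then have "(real CARD('n) * sqrt m)\<^sup>2 \<le> (\<Sum>i\<in>UNIV. \<bar>v$i\<bar>)\<^sup>2"
    using \<open>0 \<le> m\<close> by (intro power_mono) auto
  then show ?thesis
    using \<open>0 \<le> m\<close> by (simp add: m_def power_mult_distrib)
qed

theorem mainTheorem9:
  fixes k :: "real^'d \<Rightarrow> real^'d \<Rightarrow> real"
    and s2 :: real
    and X :: "'n::finite \<Rightarrow> real^'d"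
    and x :: "real^'d"
  assumes "psd_kernel k"
    and "s2 > 0"
  shows "gp_post_var k s2 X x \<le>
    k x x - (real CARD('n) * Min {(k (X i) x)^2 | i. True})
            / (real CARD('n) * Max {k (X i) (X j) | i j. True} + s2)"
proof -
  define N where "N = real CARD('n)"
  define M where "M = Max {k (X i) (X j) | i j. True}"
  define v where "v = kernel_vec k X x"
  have "N\<^sup>2 * Min {(k (X i) x)\<^sup>2 | i. True} \<le> (\<Sum>i\<in>UNIV. \<bar>v$i\<bar>)\<^sup>2"
    using card_sq_mult_Min_sq_le[of v]
    by (simp add: N_def v_def kernel_vec_def psd_kernel_sym[OF assms(1)])
  moreover have "0 < N\<^sup>2 * M + s2 * N"
    using Max_gram_entry_nonneg[OF assms(1), of X] \<open>0 < s2\<close>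
    by (simp add: N_def M_def add_nonneg_pos)
  ultimately have "N\<^sup>2 * Min {(k (X i) x)\<^sup>2 | i. True} / (N\<^sup>2 * M + s2 * N)
      \<le> v \<bullet> (matrix_inv (gram_matrix k X + s2 *\<^sub>R mat 1) *v v)"
    using sum_abs_sq_div_le_gram_inv_form[OF assms, of v X] unfolding N_def M_def
    by (meson divide_right_mono less_imp_le order_trans)
  moreover have "N\<^sup>2 * M + s2 * N = N * (N * M + s2)" and "N > 0"
    by (simp_all add: N_def power2_eq_square algebra_simps)
  ultimately show ?thesis
    by (simp add: gp_post_var_def N_def M_def v_def power2_eq_square mult.assoc)
qed

end
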